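(* Let $n$ be an even positive integer. The associated core group $\Pi^{(2)}_{L}$ of an unoriented welded link $L$ is preserved by unoriented $V^{n}$-moves.
   Context: An unoriented virtual link diagram is the image of an immersion of finitely many circles in the plane with transverse double points, each a classical crossing (with over/under information) or a virtual crossing. Welded Reidemeister moves are R1–R3, the virtual moves VR1–VR4, and the OC move (a strand passing over two strands at classical crossings may slide across a virtual crossing of those two strands); an unoriented welded link is an equivalence class of unoriented diagrams under these moves. The associated core group $\Pi^{(2)}_D$ of an unoriented virtual link diagram $D$ has one generator for each arc of $D$ (arcs run from under-crossing to under-crossing, passing through virtual crossings, which contribute no generators or relations) and one relation $yx^{-1}yz^{-1}$ for each classical crossing, where $x,z$ are the two under-arcs and $y$ is the over-arc at that crossing. It is invariant under welded Reidemeister moves, and $\Pi^{(2)}_L:=\Pi^{(2)}_D$ for a diagram $D$ of $L$. The unoriented $V^{n}$-move: inside a disk the diagram consists of two arcs $a,b$ running side by side; on one side of the move they are parallel without crossings; on the other side (same endpoints) the tangle is the $2$-braid word $(\sigma\tau)^{n}$, where $\sigma$ is a classical crossing with $b$ over $a$ and $\tau$ a virtual crossing; orientations are disregarded. The move replaces one side by the other. *)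

theory Defs
  imports "HOL-Algebra.Group"
begin

text \<open>A letter (g, True) stands for the generator g, (g, False) for its inverse.\<close>
type_synonym 'g word = "('g \<times> bool) list"

inductive pres_eq :: "'g word set \<Rightarrow> 'g word \<Rightarrow> 'g word \<Rightarrow> bool" for R where
  refl: "pres_eq R w w"
| sym: "pres_eq R u v \<Longrightarrow> pres_eq R v u"
| trans: "pres_eq R u v \<Longrightarrow> pres_eq R v w \<Longrightarrow> pres_eq R u w"
| cancel: "pres_eq R (u @ [(g, b), (g, \<not> b)] @ v) (u @ v)"
| relator: "r \<in> R \<Longrightarrow> pres_eq R (u @ r @ v) (u @ v)"

definition words :: "'g set \<Rightarrow> 'g word set" where
  "words S = {w. fst ` set w \<subseteq> S}"

definition pres_class :: "'g set \<Rightarrow> 'g word set \<Rightarrow> 'g word \<Rightarrow> 'g word set" where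
  "pres_class S R w = {v \<in> words S. pres_eq R w v}"

text \<open>The group with generators S and relators R (R should consist of words over S).\<close>
definition presented_group :: "'g set \<Rightarrow> 'g word set \<Rightarrow> 'g word set monoid" where
  "presented_group S R =
     \<lparr> carrier = pres_class S R ` words S,
       mult = (\<lambda>A B. {w \<in> words S. \<exists>u\<in>A. \<exists>v\<in>B. pres_eq R (u @ v) w}),
       one = pres_class S R [] \<rparr>"

text \<open>A diagram is a list of components (circles); each component is the cyclic
  sequence of classical crossing points met along it, read in an arbitrary direction;
  a point (c, True) is the over-passage and (c, False) the under-passage of crossing c.
  Virtual crossings are invisible (they contribute neither generators nor relations).\<close>
type_synonym 'c gauss = "('c \<times> bool) list list"

definition wf_gauss :: "'c gauss \<Rightarrow> bool" where
  "wf_gauss D \<longleftrightarrow> distinct (concat D) \<and>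
     (\<forall>c. (c, True) \<in> set (concat D) \<longleftrightarrow> (c, False) \<in> set (concat D))"

text \<open>Arcs: the arc starting at the under-passage of crossing c (going in list
  direction) is Arc c; a component without under-passages is a single arc Circ i.\<close>
datatype 'c arc = Arc 'c | Circ nat

definition arc_before :: "('c \<times> bool) list \<Rightarrow> nat \<Rightarrow> nat \<Rightarrow> 'c arc" where
  "arc_before w i j =
     (case find (\<lambda>p. \<not> snd p) (rev (take j w) @ rev (drop (Suc j) w) @ [w ! j]) of
        None \<Rightarrow> Circ i
      | Some p \<Rightarrow> Arc (fst p))"

definition crossings :: "'c gauss \<Rightarrow> 'c set" where
  "crossings D = {c. (c, False) \<in> set (concat D)}"

definition position :: "'c gauss \<Rightarrow> ('c \<times> bool) \<Rightarrow> nat \<times> nat" where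
  "position D p = (SOME ij. fst ij < length D \<and> snd ij < length (D ! fst ij)
                              \<and> D ! fst ij ! snd ij = p)"

text \<open>The arc containing an over-passage point; for an under-passage point, the arc
  ending there.\<close>
definition arc_at :: "'c gauss \<Rightarrow> ('c \<times> bool) \<Rightarrow> 'c arc" where
  "arc_at D p = (case position D p of (i, j) \<Rightarrow> arc_before (D ! i) i j)"

definition core_gens :: "'c gauss \<Rightarrow> 'c arc set" where
  "core_gens D = Arc ` crossings D \<union> {Circ i | i. i < length D \<and> (\<forall>p\<in>set (D ! i). snd p)}"

text \<open>Relation y x^-1 y z^-1 at crossing c: y over-arc, x and z the two under-arcs.\<close>
definition core_rel :: "'c gauss \<Rightarrow> 'c \<Rightarrow> 'c arc word" where
  "core_rel D c = (let y = arc_at D (c, True); x = arc_at D (c, False)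
                   in [(y, True), (x, False), (y, True), (Arc c, False)])"

definition core_rels :: "'c gauss \<Rightarrow> 'c arc word set" where
  "core_rels D = core_rel D ` crossings D"

definition core_group :: "'c gauss \<Rightarrow> 'c arc word set monoid" where
  "core_group D = presented_group (core_gens D) (core_rels D)"

definition cyc_block :: "'a list \<Rightarrow> 'a list \<Rightarrow> bool" where
  "cyc_block w xs \<longleftrightarrow> (\<exists>k. take (length xs) (rotate k w) = xs)"

text \<open>D' arises from D by a V^n-move: n new crossings c_1..c_n, all with the b-strand
  over the a-strand; along strand a they form a cyclically consecutive block of
  under-passages c_1..c_n, along strand b a consecutive block of over-passages in the
  same or the reversed order (the diagram is unoriented); deleting them gives D back.\<close>
definition vmove :: "nat \<Rightarrow> 'c gauss \<Rightarrow> 'c gauss \<Rightarrow> bool" where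
  "vmove n D D' \<longleftrightarrow> (\<exists>cs. length cs = n \<and> distinct cs \<and>
      (\<forall>c\<in>set cs. c \<notin> fst ` set (concat D)) \<and>
      map (filter (\<lambda>p. fst p \<notin> set cs)) D' = D \<and>
      (\<exists>i<length D'. cyc_block (D' ! i) (map (\<lambda>c. (c, False)) cs)) \<and>
      (\<exists>i<length D'. cyc_block (D' ! i) (map (\<lambda>c. (c, True)) cs) \<or>
                     cyc_block (D' ! i) (map (\<lambda>c. (c, True)) (rev cs))))"

end

theory Submission
  imports Defs
begin

text \<open>The new crossings c_1, ..., c_n of a V^n-move all have the same over-arc y, since the
  b-strand is not cut there. Let A_0 be the arc of the a-strand arriving at c_1 and A_k the arc
  leaving c_k. The relation at c_k says A_k = y A_(k-1)\<inverse> y, and x \<mapsto> y x\<inverse> y is an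
  involution, so A_k = A_0 for even k and A_k = y A_0\<inverse> y for odd k. As n is even, A_n = A_0:
  the two arcs that merge when the crossings are deleted are already equal in the core group
  of D'. Sending every A_k to its word in the merged arc and y, and all other arcs to
  themselves, therefore induces an isomorphism.\<close>

section \<open>Presented groups\<close>

definition inv_letter :: "'g \<times> bool \<Rightarrow> 'g \<times> bool" where
  "inv_letter p = (fst p, \<not> snd p)"

definition inv_word :: "'g word \<Rightarrow> 'g word" where
  "inv_word w = rev (map inv_letter w)"

lemma inv_letter_Pair [simp]: "inv_letter (g, b) = (g, \<not> b)"
  by (simp add: inv_letter_def)

lemma inv_word_simps [simp]:
  "inv_word [] = []"
  "inv_word (p # w) = inv_word w @ [inv_letter p]"
  "inv_word (u @ v) = inv_word v @ inv_word u"
  by (simp_all add: inv_word_def)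

lemma inv_word_inv_word [simp]: "inv_word (inv_word w) = w"
  by (induct w) auto

declare pres_eq.refl [intro, simp] pres_eq.trans [trans]

lemma pres_eq_append_cong: "pres_eq R a b \<Longrightarrow> pres_eq R (u @ a @ v) (u @ b @ v)"
proof (induct rule: pres_eq.induct)
  case (sym a b)
  then show ?case by (blast intro: pres_eq.sym)
next
  case (trans a b c)
  then show ?case by (blast intro: pres_eq.trans)
next
  case (cancel u' g b v')
  from pres_eq.cancel [of R "u @ u'" g b "v' @ v"] show ?case by simp
next
  case (relator r u' v')
  from pres_eq.relator [OF this, of "u @ u'" "v' @ v"] show ?case by simp
qed simp

lemma pres_eq_append: "pres_eq R a b \<Longrightarrow> pres_eq R c d \<Longrightarrow> pres_eq R (a @ c) (b @ d)"
  using pres_eq_append_cong [of R a b "[]" c] pres_eq_append_cong [of R c d b "[]"]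
  by (auto intro: pres_eq.trans)

lemma pres_eq_relator_Nil: "r \<in> R \<Longrightarrow> pres_eq R r []"
  using pres_eq.relator [of r R "[]" "[]"] by simp

lemma pres_eq_cancel_word: "pres_eq R (u @ x @ inv_word x @ v) (u @ v)"
proof (induct x arbitrary: u rule: rev_induct)
  case (snoc p x)
  obtain g b where p: "p = (g, b)"
    by force
  have "pres_eq R ((u @ x) @ [(g, b), (g, \<not> b)] @ inv_word x @ v) ((u @ x) @ inv_word x @ v)"
    by (rule pres_eq.cancel)
  with snoc show ?case
    by (auto simp: p intro: pres_eq.trans)
qed simp

lemma pres_eq_cancel_inv_word: "pres_eq R (u @ inv_word x @ x @ v) (u @ v)"
  using pres_eq_cancel_word [of R u "inv_word x" v] by simp

lemma pres_eq_inv_word: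
  assumes "pres_eq R a b"
  shows "pres_eq R (inv_word a) (inv_word b)"
proof -
  have "pres_eq R (inv_word a) (inv_word a @ b @ inv_word b)"
    using pres_eq.sym [OF pres_eq_cancel_word [of R "inv_word a" b "[]"]] by simp
  also have "pres_eq R \<dots> (inv_word a @ a @ inv_word b)"
    using pres_eq_append_cong [OF pres_eq.sym [OF assms]] .
  also have "pres_eq R \<dots> (inv_word b)"
    using pres_eq_cancel_inv_word [of R "[]" a "inv_word b"] by simp
  finally show ?thesis .
qed

definition word_subst :: "('g \<Rightarrow> 'h word) \<Rightarrow> 'g word \<Rightarrow> 'h word" where
  "word_subst f w = concat (map (\<lambda>p. if snd p then f (fst p) else inv_word (f (fst p))) w)"

lemma word_subst_simps [simp]:
  "word_subst f [] = []"
  "word_subst f (p # w) = (if snd p then f (fst p) else inv_word (f (fst p))) @ word_subst f w"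
  "word_subst f (u @ v) = word_subst f u @ word_subst f v"
  by (simp_all add: word_subst_def)

lemma word_subst_inv_word: "word_subst f (inv_word w) = inv_word (word_subst f w)"
  by (induct w) (auto simp: inv_letter_def)

lemma word_subst_word_subst: "word_subst g (word_subst f w) = word_subst (\<lambda>x. word_subst g (f x)) w"
  by (induct w) (auto simp: word_subst_inv_word)

lemma word_subst_letters: "word_subst (\<lambda>x. [(h x, True)]) w = map (apfst h) w"
  by (induct w) (auto simp: inv_letter_def apfst_def map_prod_def split: prod.splits)

lemma word_subst_cong: "(\<And>x. x \<in> fst ` set w \<Longrightarrow> f x = g x) \<Longrightarrow> word_subst f w = word_subst g w"
  by (induct w) auto

lemma word_subst_in_words:
  assumes "\<And>x. x \<in> S \<Longrightarrow> f x \<in> words S'" and "w \<in> words S"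
  shows "word_subst f w \<in> words S'"
  using assms(2)
proof (induct w)
  case (Cons p w)
  then have "fst p \<in> S" "w \<in> words S"
    by (auto simp: words_def)
  with Cons assms(1) [of "fst p"] show ?case
    by (auto simp: words_def inv_word_def inv_letter_def)
qed (simp add: words_def)

lemma pres_eq_word_subst:
  assumes "\<And>r. r \<in> R \<Longrightarrow> pres_eq R' (word_subst f r) []"
  shows "pres_eq R u v \<Longrightarrow> pres_eq R' (word_subst f u) (word_subst f v)"
proof (induct rule: pres_eq.induct)
  case (sym u v)
  then show ?case by (blast intro: pres_eq.sym)
next
  case (trans u v w)
  then show ?case by (blast intro: pres_eq.trans)
next
  case (cancel u g b v)
  then show ?case
    using pres_eq_cancel_word [of R' "word_subst f u" "f g" "word_subst f v"]
      pres_eq_cancel_inv_word [of R' "word_subst f u" "f g" "word_subst f v"]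
    by (cases b) simp_all
next
  case (relator r u v)
  from pres_eq_append_cong [OF assms [OF this]] show ?case by simp
qed simp

lemma pres_eq_word_subst_self:
  assumes "\<And>x. x \<in> fst ` set w \<Longrightarrow> pres_eq R (f x) [(x, True)]"
  shows "pres_eq R (word_subst f w) w"
  using assms
proof (induct w)
  case (Cons p w)
  obtain x b where p: "p = (x, b)"
    by force
  have fx: "pres_eq R (f x) [(x, True)]"
    using Cons.prems p by auto
  have "pres_eq R (if b then f x else inv_word (f x)) [(x, b)]"
    using fx pres_eq_inv_word [OF fx] by auto
  moreover have "pres_eq R (word_subst f w) w"
    using Cons by auto
  ultimately show ?case
    using pres_eq_append p by fastforce
qed simp

lemma words_append [simp]: "u @ v \<in> words S \<longleftrightarrow> u \<in> words S \<and> v \<in> words S"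
  by (auto simp: words_def)

lemma carrier_presented_group: "carrier (presented_group S R) = pres_class S R ` words S"
  by (simp add: presented_group_def)

lemma pres_class_eqI: "pres_eq R a b \<Longrightarrow> pres_class S R a = pres_class S R b"
  unfolding pres_class_def by (metis pres_eq.trans pres_eq.sym)

lemma mult_pres_class:
  assumes "a \<in> words S" and "b \<in> words S"
  shows "pres_class S R a \<otimes>\<^bsub>presented_group S R\<^esub> pres_class S R b = pres_class S R (a @ b)"
proof -
  have "a \<in> pres_class S R a" "b \<in> pres_class S R b"
    using assms by (auto simp: pres_class_def)
  then have "(\<exists>u\<in>pres_class S R a. \<exists>v\<in>pres_class S R b. pres_eq R (u @ v) w) \<longleftrightarrow>
      pres_eq R (a @ b) w" for w
    by (auto simp: pres_class_def intro: pres_eq.trans pres_eq_append)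
  then show ?thesis
    by (auto simp: presented_group_def pres_class_def)
qed

definition induced_map :: "'h set \<Rightarrow> 'h word set \<Rightarrow> ('g \<Rightarrow> 'h word) \<Rightarrow> 'g word set \<Rightarrow> 'h word set"
  where "induced_map S' R' f A = pres_class S' R' (word_subst f (SOME w. w \<in> A))"

lemma induced_map_pres_class:
  assumes "\<And>r. r \<in> R \<Longrightarrow> pres_eq R' (word_subst f r) []" and "a \<in> words S"
  shows "induced_map S' R' f (pres_class S R a) = pres_class S' R' (word_subst f a)"
proof -
  have "a \<in> pres_class S R a"
    using assms(2) by (simp add: pres_class_def)
  then have "(SOME w. w \<in> pres_class S R a) \<in> pres_class S R a"
    by (rule someI)
  then have "pres_eq R (SOME w. w \<in> pres_class S R a) a"
    by (simp add: pres_class_def pres_eq.sym)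
  then have "pres_eq R' (word_subst f (SOME w. w \<in> pres_class S R a)) (word_subst f a)"
    using pres_eq_word_subst assms(1) by blast
  then show ?thesis
    unfolding induced_map_def by (rule pres_class_eqI)
qed

lemma induced_map_hom:
  assumes respects: "\<And>r. r \<in> R \<Longrightarrow> pres_eq R' (word_subst f r) []"
    and into_words: "\<And>x. x \<in> S \<Longrightarrow> f x \<in> words S'"
  shows "induced_map S' R' f \<in> hom (presented_group S R) (presented_group S' R')"
proof (rule homI)
  fix x assume "x \<in> carrier (presented_group S R)"
  then obtain a where "a \<in> words S" "x = pres_class S R a"
    by (auto simp: carrier_presented_group)
  then show "induced_map S' R' f x \<in> carrier (presented_group S' R')"
    by (simp add: carrier_presented_group induced_map_pres_class [OF respects])
      (blast intro: word_subst_in_words into_words)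
next
  fix x y assume "x \<in> carrier (presented_group S R)" "y \<in> carrier (presented_group S R)"
  then obtain a b where "a \<in> words S" "b \<in> words S" "x = pres_class S R a" "y = pres_class S R b"
    by (auto simp: carrier_presented_group)
  moreover from this have "word_subst f a \<in> words S'" "word_subst f b \<in> words S'"
    by (simp_all add: word_subst_in_words [OF into_words])
  ultimately show "induced_map S' R' f (x \<otimes>\<^bsub>presented_group S R\<^esub> y) =
      induced_map S' R' f x \<otimes>\<^bsub>presented_group S' R'\<^esub> induced_map S' R' f y"
    by (simp add: mult_pres_class induced_map_pres_class [OF respects])
qed

lemma induced_map_inverse:
  assumes f_respects: "\<And>r. r \<in> R \<Longrightarrow> pres_eq R' (word_subst f r) []"
    and g_respects: "\<And>r. r \<in> R' \<Longrightarrow> pres_eq R (word_subst g r) []"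
    and into_words: "\<And>x. x \<in> S \<Longrightarrow> f x \<in> words S'"
    and inverse: "\<And>x. x \<in> S \<Longrightarrow> pres_eq R (word_subst g (f x)) [(x, True)]"
    and x: "x \<in> carrier (presented_group S R)"
  shows "induced_map S R g (induced_map S' R' f x) = x"
proof -
  obtain a where a: "a \<in> words S" "x = pres_class S R a"
    using x by (auto simp: carrier_presented_group)
  have "pres_eq R (word_subst g (word_subst f a)) a"
    unfolding word_subst_word_subst using a(1) inverse
    by (intro pres_eq_word_subst_self) (auto simp: words_def)
  then show ?thesis
    using a word_subst_in_words [OF into_words a(1)]
    by (simp add: induced_map_pres_class f_respects g_respects pres_class_eqI)
qed

lemma presented_group_iso:
  assumes "\<And>r. r \<in> R \<Longrightarrow> pres_eq R' (word_subst f r) []"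
    and "\<And>r. r \<in> R' \<Longrightarrow> pres_eq R (word_subst g r) []"
    and "\<And>x. x \<in> S \<Longrightarrow> f x \<in> words S'"
    and "\<And>x. x \<in> S' \<Longrightarrow> g x \<in> words S"
    and "\<And>x. x \<in> S \<Longrightarrow> pres_eq R (word_subst g (f x)) [(x, True)]"
    and "\<And>x. x \<in> S' \<Longrightarrow> pres_eq R' (word_subst f (g x)) [(x, True)]"
  shows "presented_group S R \<cong> presented_group S' R'"
proof -
  have "bij_betw (induced_map S' R' f) (carrier (presented_group S R)) (carrier (presented_group S' R'))"
  proof (rule bij_betw_byWitness [where f' = "induced_map S R g"])
    show "\<forall>x\<in>carrier (presented_group S R). induced_map S R g (induced_map S' R' f x) = x"
      using induced_map_inverse [of R R' f g S S'] assms by blast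
    show "\<forall>x\<in>carrier (presented_group S' R'). induced_map S' R' f (induced_map S R g x) = x"
      using induced_map_inverse [of R' R g f S' S] assms by blast
    show "induced_map S' R' f ` carrier (presented_group S R) \<subseteq> carrier (presented_group S' R')"
      using induced_map_hom [of R R' f S S'] assms by (blast dest: hom_carrier)
    show "induced_map S R g ` carrier (presented_group S' R') \<subseteq> carrier (presented_group S R)"
      using induced_map_hom [of R' R g S' S] assms by (blast dest: hom_carrier)
  qed
  with induced_map_hom [of R R' f S S'] assms show ?thesis
    by (auto simp: is_iso_def iso_def)
qed

text \<open>The iterates of the core operation x \<mapsto> y x\<inverse> y on a; it is an involution, so they
  alternate between a and y a\<inverse> y.\<close>
definition core_iter :: "'g \<Rightarrow> 'g \<Rightarrow> nat \<Rightarrow> 'g word" where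
  "core_iter y a k = (if even k then [(a, True)] else [(y, True), (a, False), (y, True)])"

lemma core_iter_Suc:
  "pres_eq R (core_iter y a (Suc k)) ([(y, True)] @ inv_word (core_iter y a k) @ [(y, True)])"
proof (cases "even k")
  case False
  have "pres_eq R [(y, True), (y, False), (a, True), (y, False), (y, True)] [(a, True)]"
    using pres_eq.cancel [of R "[]" y True "[(a, True), (y, False), (y, True)]"]
      pres_eq.cancel [of R "[(a, True)]" y False "[]"]
    by (auto intro: pres_eq.trans)
  with False show ?thesis
    by (simp add: core_iter_def pres_eq.sym)
qed (simp add: core_iter_def)

lemma map_apfst_core_iter: "map (apfst h) (core_iter y a k) = core_iter (h y) (h a) k"
  by (simp add: core_iter_def)

lemma pres_eq_relator_split: "w @ inv_word v \<in> R \<Longrightarrow> pres_eq R w v"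
  using pres_eq.sym [OF pres_eq_cancel_inv_word [of R w v "[]"]]
    pres_eq_append_cong [OF pres_eq_relator_Nil, of "w @ inv_word v" R "[]" v]
  by (auto intro: pres_eq.trans)

section \<open>Arcs of Gauss diagrams\<close>

text \<open>The arc one is on after walking along v on component i: the one starting at the last
  under-passage of v, or the whole circle if v has none.\<close>
definition final_arc :: "nat \<Rightarrow> ('c \<times> bool) list \<Rightarrow> 'c arc" where
  "final_arc i v = (case find (\<lambda>p. \<not> snd p) (rev v) of None \<Rightarrow> Circ i | Some p \<Rightarrow> Arc (fst p))"

lemma find_append: "find P (xs @ ys) = (case find P xs of None \<Rightarrow> find P ys | Some x \<Rightarrow> Some x)"
  by (induct xs) auto

lemma find_filter: "(\<And>x. x \<in> set xs \<Longrightarrow> Q x \<Longrightarrow> P x) \<Longrightarrow> find Q (filter P xs) = find Q xs"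
  by (induct xs) auto

lemma final_arc_append_over:
  assumes "\<forall>p\<in>set v. snd p"
  shows "final_arc i (u @ v) = final_arc i u"
proof -
  have "find (\<lambda>p. \<not> snd p) (rev v) = None"
    using assms by (auto simp: find_None_iff)
  then show ?thesis
    by (simp add: final_arc_def find_append)
qed

lemma final_arc_over_append:
  assumes "\<forall>p\<in>set u. snd p"
  shows "final_arc i (u @ v) = final_arc i v"
proof -
  have "find (\<lambda>p. \<not> snd p) (rev u) = None"
    using assms by (auto simp: find_None_iff)
  then show ?thesis
    by (cases "find (\<lambda>p. \<not> snd p) (rev v)") (simp_all add: final_arc_def find_append)
qed

lemma final_arc_append_under:
  assumes "(c, False) \<in> set v"
  shows "final_arc i (u @ v) = final_arc i v"
proof -
  have "find (\<lambda>p. \<not> snd p) (rev v) \<noteq> None"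
    using assms by (auto simp: find_None_iff)
  then show ?thesis
    by (auto simp: final_arc_def find_append)
qed

lemma final_arc_snoc_under: "final_arc i (u @ [(c, False)]) = Arc c"
  by (simp add: final_arc_def)

lemma final_arc_cases:
  obtains "\<forall>p\<in>set v. snd p" and "final_arc i v = Circ i"
  | c where "(c, False) \<in> set v" and "final_arc i v = Arc c"
proof (cases "find (\<lambda>p. \<not> snd p) (rev v)")
  case None
  then have "\<forall>p\<in>set v. snd p"
    unfolding find_None_iff by force
  with None show ?thesis
    by (intro that(1)) (simp_all add: final_arc_def)
next
  case (Some p)
  then have "p \<in> set (rev v)" and "\<not> snd p"
    by (metis find_Some_iff nth_mem)+
  then have "(fst p, False) \<in> set v"
    by (metis prod.collapse set_rev)
  with Some show ?thesis
    by (intro that(2)) (simp_all add: final_arc_def)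
qed

lemma final_arc_filter:
  assumes "\<And>c. (c, False) \<in> set v \<Longrightarrow> P (c, False)"
  shows "final_arc i (filter P v) = final_arc i v"
proof -
  have "find (\<lambda>p. \<not> snd p) (filter P (rev v)) = find (\<lambda>p. \<not> snd p) (rev v)"
    using assms by (intro find_filter) (metis set_rev prod.collapse)
  then show ?thesis
    by (simp add: final_arc_def rev_filter)
qed

lemma arc_before_eq_final_arc:
  assumes "j < length w"
  shows "arc_before w i j = final_arc i (rotate j w)"
proof -
  have "drop j w = w ! j # drop (Suc j) w"
    using assms by (simp add: Cons_nth_drop_Suc)
  then show ?thesis
    using assms by (simp add: arc_before_def final_arc_def rotate_drop_take)
qed

lemma distinct_concat_nth_disjoint:
  assumes "distinct (concat xss)" and "i < j" and "j < length xss"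
  shows "set (xss ! i) \<inter> set (xss ! j) = {}"
proof -
  have "set (concat (take j xss)) \<inter> set (concat (drop j xss)) = {}"
    using assms(1) by (metis append_take_drop_id concat_append distinct_append)
  moreover have "set (xss ! i) \<subseteq> set (concat (take j xss))"
    using assms(2,3) by (auto simp: in_set_conv_nth intro!: exI [of _ i])
  moreover have "set (xss ! j) \<subseteq> set (concat (drop j xss))"
    using assms(3) by (simp add: Cons_nth_drop_Suc [symmetric])
  ultimately show ?thesis
    by blast
qed

lemma distinct_concat_nth_unique:
  assumes "distinct (concat xss)" and "i < length xss" and "i' < length xss"
    and "p \<in> set (xss ! i)" and "p \<in> set (xss ! i')"
  shows "i = i'"
  using distinct_concat_nth_disjoint [OF assms(1)] assms(2-5)
  by (metis disjoint_iff linorder_neqE_nat)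

lemma position_nth:
  assumes "distinct (concat D)" and "i < length D" and "j < length (D ! i)"
  shows "position D (D ! i ! j) = (i, j)"
  unfolding position_def
proof (rule some_equality)
  fix ij :: "nat \<times> nat"
  assume ij: "fst ij < length D \<and> snd ij < length (D ! fst ij) \<and> D ! fst ij ! snd ij = D ! i ! j"
  then have "fst ij = i"
    using distinct_concat_nth_unique [OF assms(1)] assms(2,3) by (metis nth_mem)
  moreover have "distinct (D ! i)"
    using assms(1,2) by (simp add: distinct_concat_iff)
  ultimately show "ij = (i, j)"
    using ij assms(3) by (metis nth_eq_iff_index_eq prod.collapse)
qed (use assms in simp)

lemma arc_at_split:
  assumes "distinct (concat D)" and "i < length D" and "rotate t (D ! i) = u @ p # v"
  shows "arc_at D p = final_arc i (p # v @ u)"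
proof -
  have rot: "rotate (length u + t) (D ! i) = p # v @ u"
    using assms(3) by (simp flip: rotate_rotate add: rotate_append)
  then have ne: "D ! i \<noteq> []"
    by auto
  define j where "j = (length u + t) mod length (D ! i)"
  have j: "j < length (D ! i)"
    using ne by (simp add: j_def)
  have "D ! i ! j = p"
    using hd_rotate_conv_nth [OF ne, of "length u + t"] rot by (simp add: j_def)
  then have "arc_at D p = arc_before (D ! i) i j"
    using position_nth [OF assms(1,2) j] by (simp add: arc_at_def)
  also have "\<dots> = final_arc i (rotate j (D ! i))"
    using arc_before_eq_final_arc [OF j] .
  also have "rotate j (D ! i) = p # v @ u"
    using rot by (metis j_def rotate_conv_mod)
  finally show ?thesis .
qed

lemma filter_rotate: "\<exists>t'. filter P (rotate t w) = rotate t' (filter P w)"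
proof -
  let ?m = "t mod length w"
  have "filter P (rotate t w) = filter P (drop ?m w) @ filter P (take ?m w)"
    by (simp add: rotate_drop_take)
  also have "\<dots> = rotate (length (filter P (take ?m w))) (filter P (take ?m w) @ filter P (drop ?m w))"
    by (simp add: rotate_append)
  also have "filter P (take ?m w) @ filter P (drop ?m w) = filter P w"
    by (simp flip: filter_append)
  finally show ?thesis
    by blast
qed

lemma Arc_in_core_gens: "Arc c \<in> core_gens D \<longleftrightarrow> c \<in> crossings D"
  by (auto simp: core_gens_def)

lemma Circ_in_core_gens: "Circ i \<in> core_gens D \<longleftrightarrow> i < length D \<and> (\<forall>p\<in>set (D ! i). snd p)"
  by (auto simp: core_gens_def)

lemma under_in_crossings: "i < length D \<Longrightarrow> (c, False) \<in> set (D ! i) \<Longrightarrow> c \<in> crossings D"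
  by (auto simp: crossings_def)

section \<open>Invariance of the core group under V^n-moves\<close>

text \<open>Strand a runs on component ia, strand b on component ib; rotating them by ka and kb
  brings the n under-passages, resp. the n over-passages, of the move to the front. Only the
  set of over-passages matters: they all lie on the same over-arc.\<close>
locale vn_move =
  fixes D D' :: "'c gauss" and cs :: "'c list"
    and ia ka ib kb :: nat and rest_a over_block rest_b :: "('c \<times> bool) list"
  assumes wf_gauss': "wf_gauss D'"
    and D_eq: "D = map (filter (\<lambda>p. fst p \<notin> set cs)) D'"
    and distinct_cs: "distinct cs" and cs_ne: "cs \<noteq> []" and even_length_cs: "even (length cs)"
    and ia: "ia < length D'"
    and rotate_a: "rotate ka (D' ! ia) = map (\<lambda>c. (c, False)) cs @ rest_a"
    and ib: "ib < length D'"
    and rotate_b: "rotate kb (D' ! ib) = over_block @ rest_b"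
    and set_over_block: "set over_block = (\<lambda>c. (c, True)) ` set cs"
begin

definition kept :: "'c \<times> bool \<Rightarrow> bool" where
  "kept p \<longleftrightarrow> fst p \<notin> set cs"

definition under_block :: "('c \<times> bool) list" where
  "under_block = map (\<lambda>c. (c, False)) cs"

definition c_last :: 'c where
  "c_last = last cs"

definition arc_in :: "'c arc" where
  "arc_in = final_arc ia (under_block @ rest_a)"

text \<open>In D the arcs arc_in and Arc c_last of D' are joined into merged_arc; it is the whole
  circle ia when strand a has no under-passages outside the move.\<close>
definition merged_arc :: "'c arc" where
  "merged_arc = final_arc ia rest_a"

definition over_arc :: "'c arc" where
  "over_arc = final_arc ib rest_b"

text \<open>block_arc k is A_k: block_arc 0 = arc_in arrives at cs ! 0, and block_arc (Suc k) =
  Arc (cs ! k) leaves cs ! k; so block_arc (length cs) = Arc c_last.\<close>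
definition block_arc :: "nat \<Rightarrow> 'c arc" where
  "block_arc k = (if k = 0 then arc_in else Arc (cs ! (k - 1)))"

definition inner_arcs :: "'c arc set" where
  "inner_arcs = Arc ` (set cs - {c_last})"

definition odd_block_arcs :: "'c arc set" where
  "odd_block_arcs = block_arc ` {k. k < length cs \<and> odd k}"

definition to_base :: "'c arc \<Rightarrow> 'c arc" where
  "to_base z = (if z \<in> Arc ` set cs then merged_arc else z)"

definition from_base :: "'c arc \<Rightarrow> 'c arc" where
  "from_base z = (if z = Circ ia then Arc c_last else z)"

text \<open>Each arc is sent to the word it equals in the core group of D' (block_arc_core_iter),
  with arc_in and Arc c_last both read as merged_arc.\<close>
definition base_image :: "'c arc \<Rightarrow> 'c arc word" where
  "base_image z = (if z \<in> odd_block_arcs then core_iter (to_base over_arc) merged_arc 1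
                   else [(to_base z, True)])"

definition lift_image :: "'c arc \<Rightarrow> 'c arc word" where
  "lift_image z = [(from_base z, True)]"

lemma distinct_concat_D': "distinct (concat D')"
  using wf_gauss' by (simp add: wf_gauss_def)

lemma length_D: "length D = length D'"
  by (simp add: D_eq)

lemma nth_D: "i < length D' \<Longrightarrow> D ! i = filter kept (D' ! i)"
  by (simp add: D_eq kept_def [abs_def])

lemma distinct_concat_D: "distinct (concat D)"
  using distinct_concat_D' by (simp add: D_eq flip: filter_concat)

lemma c_last_in_cs: "c_last \<in> set cs"
  using cs_ne by (simp add: c_last_def)

lemma final_arc_under_block: "final_arc i (u @ under_block) = Arc c_last"
proof -
  obtain cs' c where "cs = cs' @ [c]"
    using cs_ne by (metis rev_exhaust)
  then show ?thesis
    unfolding under_block_def c_last_def by (simp add: final_arc_snoc_under flip: append_assoc)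
qed

lemma set_D'_ia: "set (D' ! ia) = set under_block \<union> set rest_a"
  using rotate_a by (metis set_append set_rotate under_block_def)

lemma under_rest_a_kept: "(c, False) \<in> set rest_a \<Longrightarrow> c \<notin> set cs"
  using rotate_a distinct_concat_D' ia
  by (metis (no_types, lifting) distinct_append distinct_rotate disjoint_iff image_eqI list.set_map
      nth_mem distinct_concat_iff)

lemma under_in_component_a:
  assumes "i < length D'" and "(c, False) \<in> set (D' ! i)" and "c \<in> set cs"
  shows "i = ia"
proof -
  have "(c, False) \<in> set (D' ! ia)"
    using assms(3) set_D'_ia by (simp add: under_block_def)
  then show ?thesis
    using distinct_concat_nth_unique [OF distinct_concat_D' assms(1) ia assms(2)] by blast
qed

lemma crossings_D: "crossings D = crossings D' - set cs"
  by (auto simp: crossings_def D_eq simp flip: filter_concat)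

lemma Circ_in_core_gens_D:
  "Circ i \<in> core_gens D \<longleftrightarrow> i < length D' \<and> (\<forall>p\<in>set (D' ! i). kept p \<longrightarrow> snd p)"
  by (auto simp: Circ_in_core_gens length_D nth_D)

lemma c_last_under_a: "(c_last, False) \<in> set (D' ! ia)"
  using set_D'_ia c_last_in_cs by (simp add: under_block_def)

lemma c_last_crossing: "c_last \<in> crossings D'"
  using under_in_crossings [OF ia c_last_under_a] .

lemma Circ_ia_notin: "Circ ia \<notin> core_gens D'"
  using c_last_under_a unfolding Circ_in_core_gens by (metis snd_conv)

lemma merged_arc_cases:
  obtains "\<forall>p\<in>set rest_a. snd p" and "merged_arc = Circ ia" and "arc_in = Arc c_last"
  | c where "(c, False) \<in> set rest_a" and "merged_arc = Arc c" and "arc_in = Arc c"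
proof (cases rule: final_arc_cases [of rest_a ia])
  case 1
  then have "arc_in = Arc c_last"
    using final_arc_under_block [of ia "[]"] by (simp add: arc_in_def final_arc_append_over)
  with 1 that(1) show ?thesis
    by (simp add: merged_arc_def)
next
  case (2 c)
  then show ?thesis
    using that(2) by (simp add: arc_in_def merged_arc_def final_arc_append_under)
qed

lemma merged_arc_in_core_gens: "merged_arc \<in> core_gens D"
proof (cases rule: merged_arc_cases)
  case 1
  have "snd p" if "p \<in> set (D' ! ia)" and "kept p" for p
  proof -
    have "p \<notin> set under_block"
      using that(2) by (auto simp: under_block_def kept_def)
    then show ?thesis
      using that(1) 1(1) set_D'_ia by blast
  qed
  with 1 ia show ?thesis
    by (simp add: Circ_in_core_gens_D)
next
  case (2 c)
  then have "c \<in> crossings D'"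
    using set_D'_ia under_in_crossings [OF ia] by simp
  with 2 show ?thesis
    using under_rest_a_kept [OF 2(1)] by (simp add: Arc_in_core_gens crossings_D)
qed

lemma merged_arc_eq_Circ: "Circ ia \<in> core_gens D \<Longrightarrow> merged_arc = Circ ia"
proof (cases rule: merged_arc_cases)
  case (2 c)
  moreover assume "Circ ia \<in> core_gens D"
  ultimately show ?thesis
    using set_D'_ia under_rest_a_kept by (force simp: Circ_in_core_gens_D kept_def)
qed

lemma arc_in_outer: "arc_in \<in> core_gens D' - inner_arcs"
proof (cases rule: merged_arc_cases)
  case 1
  then show ?thesis
    using c_last_crossing by (auto simp: Arc_in_core_gens inner_arcs_def)
next
  case (2 c)
  then have "c \<in> crossings D'"
    using set_D'_ia under_in_crossings [OF ia] by simp
  with 2 show ?thesis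
    using under_rest_a_kept [OF 2(1)] by (auto simp: Arc_in_core_gens inner_arcs_def)
qed

lemma to_base_arc_in: "to_base arc_in = merged_arc"
  by (cases rule: merged_arc_cases) (auto simp: to_base_def c_last_in_cs under_rest_a_kept)

lemma from_base_merged_arc: "from_base merged_arc = arc_in"
  by (cases rule: merged_arc_cases) (simp_all add: from_base_def)

lemma to_base_in_core_gens:
  assumes "z \<in> core_gens D'"
  shows "to_base z \<in> core_gens D"
proof (cases z)
  case (Arc c)
  with assms show ?thesis
    using merged_arc_in_core_gens by (auto simp: to_base_def Arc_in_core_gens crossings_D)
next
  case (Circ i)
  with assms have "i < length D'" and "\<forall>p\<in>set (D' ! i). snd p"
    by (simp_all add: Circ_in_core_gens)
  with Circ show ?thesis
    by (auto simp: to_base_def Circ_in_core_gens_D)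
qed

lemma from_base_in_core_gens:
  assumes "z \<in> core_gens D"
  shows "from_base z \<in> core_gens D'"
proof (cases z)
  case (Arc c)
  with assms show ?thesis
    by (simp add: from_base_def Arc_in_core_gens crossings_D)
next
  case (Circ i)
  show ?thesis
  proof (cases "i = ia")
    case True
    with Circ show ?thesis
      by (simp add: from_base_def Arc_in_core_gens c_last_crossing)
  next
    case False
    from assms Circ have i: "i < length D'" and kept_over: "\<forall>p\<in>set (D' ! i). kept p \<longrightarrow> snd p"
      by (simp_all add: Circ_in_core_gens_D)
    have "snd p" if "p \<in> set (D' ! i)" for p
      using kept_over that False under_in_component_a [OF i]
      by (cases p) (metis fst_conv snd_conv kept_def)
    with i Circ False show ?thesis
      by (simp add: from_base_def Circ_in_core_gens)
  qed
qed

lemma from_base_outer: "z \<in> core_gens D \<Longrightarrow> from_base z \<notin> inner_arcs"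
  by (auto simp: from_base_def inner_arcs_def Arc_in_core_gens crossings_D)

lemma to_base_from_base: "z \<in> core_gens D \<Longrightarrow> to_base (from_base z) = z"
  using merged_arc_eq_Circ c_last_in_cs
  by (auto simp: from_base_def to_base_def Arc_in_core_gens crossings_D)

lemma arc_at_D_split:
  assumes "i < length D'" and "rotate t (D' ! i) = u @ p # v" and "kept p"
  shows "arc_at D p = final_arc i (filter kept (p # v @ u))"
proof -
  obtain t' where "filter kept (rotate t (D' ! i)) = rotate t' (D ! i)"
    using filter_rotate nth_D [OF assms(1)] by metis
  with assms(2,3) have "rotate t' (D ! i) = filter kept u @ p # filter kept v"
    by simp
  then have "arc_at D p = final_arc i (p # filter kept v @ filter kept u)"
    using arc_at_split [OF distinct_concat_D] assms(1) length_D by simp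
  with assms(3) show ?thesis
    by simp
qed

lemma arc_at_off_a:
  assumes "i < length D'" and "i \<noteq> ia" and "p \<in> set (D' ! i)"
  shows "arc_at D' p \<in> core_gens D' - Arc ` set cs"
    and "kept p \<Longrightarrow> arc_at D p = arc_at D' p"
proof -
  obtain u v where uv: "D' ! i = u @ p # v"
    using split_list assms(3) by metis
  let ?w = "p # v @ u"
  have set_w: "set ?w = set (D' ! i)"
    using uv by auto
  have arc: "arc_at D' p = final_arc i ?w"
    using arc_at_split [OF distinct_concat_D' assms(1), of 0] uv by simp
  have unders_kept: "c \<notin> set cs" if "(c, False) \<in> set ?w" for c
    using under_in_component_a [OF assms(1)] that set_w assms(2) by blast
  show "arc_at D' p \<in> core_gens D' - Arc ` set cs"
  proof (cases rule: final_arc_cases [of ?w i])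
    case 1
    with arc set_w assms(1,2) show ?thesis
      by (auto simp: Circ_in_core_gens)
  next
    case (2 c)
    with arc unders_kept under_in_crossings [OF assms(1)] set_w show ?thesis
      by (auto simp: Arc_in_core_gens)
  qed
  assume "kept p"
  then have "arc_at D p = final_arc i (filter kept ?w)"
    using arc_at_D_split [OF assms(1), of 0] uv by simp
  also have "\<dots> = final_arc i ?w"
    using unders_kept by (intro final_arc_filter) (simp add: kept_def)
  finally show "arc_at D p = arc_at D' p"
    using arc by simp
qed

lemma arc_at_rest_a_split:
  assumes uv: "rest_a = u @ p # v"
  shows "arc_at D' p = final_arc ia ((p # v) @ under_block @ u)"
    and "kept p \<Longrightarrow> arc_at D p = final_arc ia ((p # v) @ u)"
proof -
  have rot: "rotate ka (D' ! ia) = (under_block @ u) @ p # v"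
    using rotate_a uv by (simp add: under_block_def)
  show "arc_at D' p = final_arc ia ((p # v) @ under_block @ u)"
    using arc_at_split [OF distinct_concat_D' ia rot] by simp
  assume "kept p"
  then have "arc_at D p = final_arc ia (filter kept ((p # v) @ under_block @ u))"
    using arc_at_D_split [OF ia rot] by simp
  also have "filter kept ((p # v) @ under_block @ u) = filter kept ((p # v) @ u)"
    by (simp add: under_block_def kept_def)
  also have "final_arc ia \<dots> = final_arc ia ((p # v) @ u)"
    using under_rest_a_kept uv by (intro final_arc_filter) (auto simp: kept_def)
  finally show "arc_at D p = final_arc ia ((p # v) @ u)" .
qed

text \<open>If no under-passage of rest_a comes before p, the arc through p is Arc c_last in D',
  and in D it runs on through the site of the move into merged_arc.\<close>
lemma arc_at_rest_a:
  assumes "p \<in> set rest_a"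
  shows "arc_at D' p \<in> core_gens D' - inner_arcs"
    and "kept p \<Longrightarrow> arc_at D p = to_base (arc_at D' p)"
proof -
  obtain u v where uv: "rest_a = u @ p # v"
    using split_list assms by metis
  note arc = arc_at_rest_a_split(1) [OF uv] and arc_D = arc_at_rest_a_split(2) [OF uv]
  have "arc_at D' p \<in> core_gens D' - inner_arcs \<and> (kept p \<longrightarrow> arc_at D p = to_base (arc_at D' p))"
  proof (cases rule: final_arc_cases [of u ia])
    case 1
    then have "arc_at D' p = Arc c_last"
      using arc final_arc_append_over [OF 1(1), of ia "(p # v) @ under_block"]
        final_arc_under_block [of ia "p # v"]
      by simp
    moreover have "merged_arc = final_arc ia (p # v)"
      unfolding merged_arc_def using final_arc_over_append [OF 1(1)] uv by simp
    then have "arc_at D p = merged_arc" if "kept p"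
      using arc_D [OF that] final_arc_append_over [OF 1(1), of ia "p # v"] by simp
    ultimately show ?thesis
      using c_last_crossing c_last_in_cs by (auto simp: Arc_in_core_gens inner_arcs_def to_base_def)
  next
    case (2 c)
    then have "c \<notin> set cs" and "c \<in> crossings D'"
      using under_rest_a_kept uv set_D'_ia under_in_crossings [OF ia] by auto
    moreover have "arc_at D' p = Arc c"
      using arc final_arc_append_under [OF 2(1), of ia "(p # v) @ under_block"] 2(2) by simp
    moreover have "arc_at D p = Arc c" if "kept p"
      using arc_D [OF that] final_arc_append_under [OF 2(1), of ia "p # v"] 2(2) by simp
    ultimately show ?thesis
      by (auto simp: Arc_in_core_gens inner_arcs_def to_base_def)
  qed
  then show "arc_at D' p \<in> core_gens D' - inner_arcs"
    and "kept p \<Longrightarrow> arc_at D p = to_base (arc_at D' p)"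
    by blast+
qed

lemma arc_at_kept_or_over:
  assumes "p \<in> set (concat D')" and "snd p \<or> kept p"
  shows "arc_at D' p \<in> core_gens D' - inner_arcs"
    and "kept p \<Longrightarrow> arc_at D p = to_base (arc_at D' p)"
proof -
  obtain w where "w \<in> set D'" and "p \<in> set w"
    using assms(1) by auto
  then obtain i where i: "i < length D'" "p \<in> set (D' ! i)"
    by (metis in_set_conv_nth)
  have "arc_at D' p \<in> core_gens D' - inner_arcs \<and> (kept p \<longrightarrow> arc_at D p = to_base (arc_at D' p))"
  proof (cases "i = ia")
    case True
    have "p \<notin> set under_block"
      using assms(2) by (auto simp: under_block_def kept_def)
    with True i(2) set_D'_ia have "p \<in> set rest_a"
      by blast
    then show ?thesis
      using arc_at_rest_a by blast
  next
    case False
    then show ?thesis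
      using arc_at_off_a [OF i(1) False i(2)]
      by (auto simp: inner_arcs_def to_base_def)
  qed
  then show "arc_at D' p \<in> core_gens D' - inner_arcs"
    and "kept p \<Longrightarrow> arc_at D p = to_base (arc_at D' p)"
    by blast+
qed

lemma arc_at_over_block:
  assumes "c \<in> set cs"
  shows "arc_at D' (c, True) = over_arc"
proof -
  obtain u v where uv: "over_block = u @ (c, True) # v"
    using assms set_over_block split_list by (metis image_eqI)
  have "\<forall>q\<in>set over_block. snd q"
    using set_over_block by auto
  then have over_u: "\<forall>q\<in>set u. snd q" and over_v: "\<forall>q\<in>set ((c, True) # v). snd q"
    using uv by auto
  have "rotate kb (D' ! ib) = u @ (c, True) # v @ rest_b"
    using rotate_b uv by simp
  then have "arc_at D' (c, True) = final_arc ib (((c, True) # v) @ rest_b @ u)"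
    using arc_at_split [OF distinct_concat_D' ib] by simp
  also have "\<dots> = over_arc"
    using over_u over_v by (simp add: over_arc_def final_arc_over_append final_arc_append_over
        del: append_Cons flip: append_assoc)
  finally show ?thesis .
qed

lemma arc_at_under_block:
  assumes "k < length cs"
  shows "arc_at D' (cs ! k, False) = block_arc k"
proof -
  have drop_k: "(cs ! k, False) # drop (Suc k) under_block = drop k under_block"
    using assms Cons_nth_drop_Suc [of k under_block] by (simp add: under_block_def)
  have "rotate ka (D' ! ia) = take k under_block @ (cs ! k, False) # drop (Suc k) under_block @ rest_a"
    using rotate_a drop_k by (simp add: under_block_def [symmetric])
  then have arc: "arc_at D' (cs ! k, False) = final_arc ia (drop k under_block @ rest_a @ take k under_block)"
    using arc_at_split [OF distinct_concat_D' ia] drop_k [symmetric] by simp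
  show ?thesis
  proof (cases k)
    case 0
    with arc show ?thesis
      by (simp add: block_arc_def arc_in_def)
  next
    case (Suc m)
    with assms have "take k under_block = take m under_block @ [(cs ! m, False)]"
      by (simp add: under_block_def take_Suc_conv_app_nth)
    with arc Suc show ?thesis
      by (simp add: block_arc_def final_arc_snoc_under flip: append_assoc)
  qed
qed

lemma over_arc_outer: "over_arc \<in> core_gens D' - inner_arcs"
proof -
  have "(c_last, True) \<in> set (D' ! ib)"
    using rotate_b set_over_block c_last_in_cs by (metis Un_iff image_eqI set_append set_rotate)
  then have "(c_last, True) \<in> set (concat D')"
    using ib by auto
  from arc_at_kept_or_over(1) [OF this] show ?thesis
    using arc_at_over_block [OF c_last_in_cs] by simp
qed

lemma passages_in_concat: "c \<in> crossings D' \<Longrightarrow> (c, b) \<in> set (concat D')"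
  using wf_gauss' by (cases b) (auto simp: crossings_def wf_gauss_def)

lemma core_rel_block:
  "k < length cs \<Longrightarrow> core_rel D' (cs ! k) =
     [(over_arc, True), (block_arc k, False), (over_arc, True), (block_arc (Suc k), False)]"
  using arc_at_over_block arc_at_under_block by (simp add: core_rel_def Let_def block_arc_def)

lemma core_rel_letters_outer:
  assumes "c \<in> crossings D'" and "c \<notin> set cs"
  shows "fst ` set (core_rel D' c) \<subseteq> core_gens D' - inner_arcs"
  using arc_at_kept_or_over(1) [OF passages_in_concat [OF assms(1)]] assms
  by (auto simp: core_rel_def Let_def kept_def Arc_in_core_gens inner_arcs_def)

lemma core_rel_D:
  assumes "c \<in> crossings D"
  shows "core_rel D c = map (apfst to_base) (core_rel D' c)"
proof -
  have c: "c \<in> crossings D'" "c \<notin> set cs"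
    using assms crossings_D by auto
  then have "arc_at D (c, b) = to_base (arc_at D' (c, b))" for b
    using arc_at_kept_or_over(2) [OF passages_in_concat [OF c(1)]] by (simp add: kept_def)
  moreover have "to_base (Arc c) = Arc c"
    using c(2) by (auto simp: to_base_def)
  ultimately show ?thesis
    by (simp add: core_rel_def Let_def)
qed

lemma block_arc_core_iter:
  "k \<le> length cs \<Longrightarrow> pres_eq (core_rels D') [(block_arc k, True)] (core_iter over_arc arc_in k)"
proof (induct k)
  case 0
  then show ?case
    by (simp add: block_arc_def core_iter_def)
next
  case (Suc k)
  let ?R = "core_rels D'" and ?y = "[(over_arc, True)]"
  have k: "k < length cs"
    using Suc.prems by simp
  have "(cs ! k, False) \<in> set (D' ! ia)"
    using k set_D'_ia by (simp add: under_block_def)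
  then have "core_rel D' (cs ! k) \<in> ?R"
    using under_in_crossings [OF ia] by (simp add: core_rels_def)
  then have "pres_eq ?R (?y @ inv_word [(block_arc k, True)] @ ?y) [(block_arc (Suc k), True)]"
    by (intro pres_eq_relator_split) (simp add: core_rel_block [OF k])
  then have "pres_eq ?R [(block_arc (Suc k), True)] (?y @ inv_word [(block_arc k, True)] @ ?y)"
    by (rule pres_eq.sym)
  also have "pres_eq ?R \<dots> (?y @ inv_word (core_iter over_arc arc_in k) @ ?y)"
    using Suc k by (intro pres_eq_append_cong pres_eq_inv_word) simp
  also have "pres_eq ?R \<dots> (core_iter over_arc arc_in (Suc k))"
    by (rule pres_eq.sym [OF core_iter_Suc])
  finally show ?case .
qed

lemma odd_block_arcs_inner: "odd_block_arcs \<subseteq> inner_arcs"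
proof
  fix z assume "z \<in> odd_block_arcs"
  then obtain k where k: "k < length cs" "odd k" "z = block_arc k"
    by (auto simp: odd_block_arcs_def)
  moreover have "0 < k"
    using k(2) by (rule odd_pos)
  ultimately have "cs ! (k - 1) \<noteq> cs ! (length cs - 1)"
    using distinct_cs by (simp add: nth_eq_iff_index_eq)
  with k show "z \<in> inner_arcs"
    using cs_ne by (auto simp: block_arc_def inner_arcs_def c_last_def last_conv_nth)
qed

lemma pres_eq_from_base_to_base:
  assumes "z \<in> core_gens D'" and "z \<notin> odd_block_arcs"
  shows "pres_eq (core_rels D') [(from_base (to_base z), True)] [(z, True)]"
proof (cases "z \<in> Arc ` set cs")
  case True
  then obtain j where j: "j < length cs" "z = Arc (cs ! j)"
    by (auto simp: in_set_conv_nth)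
  then have z: "z = block_arc (Suc j)"
    by (simp add: block_arc_def)
  \<comment> \<open>For j = length cs - 1 this is where the evenness of n is used.\<close>
  have "even (Suc j)"
  proof (rule ccontr)
    assume "odd (Suc j)"
    with j(1) even_length_cs have "Suc j < length cs"
      by (metis Suc_leI le_neq_implies_less)
    with \<open>odd (Suc j)\<close> z assms(2) show False
      by (auto simp: odd_block_arcs_def)
  qed
  with block_arc_core_iter [of "Suc j"] j(1) z
  have "pres_eq (core_rels D') [(z, True)] [(arc_in, True)]"
    by (simp add: core_iter_def)
  with True show ?thesis
    by (simp add: to_base_def from_base_merged_arc pres_eq.sym)
next
  case False
  with assms(1) Circ_ia_notin show ?thesis
    by (auto simp: to_base_def from_base_def)
qed

lemma base_image_outer: "z \<notin> odd_block_arcs \<Longrightarrow> base_image z = [(to_base z, True)]"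
  by (simp add: base_image_def)

lemma even_block_arc_not_odd:
  assumes "k \<le> length cs" and "even k"
  shows "block_arc k \<notin> odd_block_arcs"
proof
  assume "block_arc k \<in> odd_block_arcs"
  then obtain k' where k': "k' < length cs" "odd k'" "block_arc k = block_arc k'"
    by (auto simp: odd_block_arcs_def)
  show False
  proof (cases k)
    case 0
    have "block_arc k' \<in> odd_block_arcs"
      using k'(1,2) by (simp add: odd_block_arcs_def)
    moreover have "block_arc k' = arc_in"
      using k'(3) 0 by (simp add: block_arc_def)
    ultimately show False
      using arc_in_outer odd_block_arcs_inner by auto
  next
    case (Suc m)
    with k' assms distinct_cs show False
      by (auto simp: block_arc_def nth_eq_iff_index_eq split: if_splits)
  qed
qed

lemma base_image_block_arc:
  assumes "k \<le> length cs"
  shows "base_image (block_arc k) = core_iter (to_base over_arc) merged_arc k"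
proof (cases "odd k")
  case True
  with assms even_length_cs have "k < length cs"
    using le_neq_implies_less by blast
  with True show ?thesis
    by (auto simp: base_image_def odd_block_arcs_def core_iter_def)
next
  case False
  with assms have "block_arc k \<notin> odd_block_arcs"
    by (simp add: even_block_arc_not_odd)
  moreover have "to_base (block_arc k) = merged_arc"
    using assms to_base_arc_in by (auto simp: block_arc_def to_base_def)
  ultimately show ?thesis
    using False by (simp add: base_image_outer core_iter_def)
qed

lemma word_subst_lift_image: "word_subst lift_image w = map (apfst from_base) w"
  unfolding lift_image_def [abs_def] by (rule word_subst_letters)

lemma lift_respects_rels:
  assumes "r \<in> core_rels D"
  shows "pres_eq (core_rels D') (word_subst lift_image r) []"
proof -
  obtain c where c: "c \<in> crossings D" "r = core_rel D c"
    using assms by (auto simp: core_rels_def)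
  then have c': "c \<in> crossings D'" "c \<notin> set cs"
    using crossings_D by auto
  have "word_subst lift_image r = map (apfst from_base) (map (apfst to_base) (core_rel D' c))"
    using c core_rel_D by (simp add: word_subst_lift_image)
  also have "\<dots> = word_subst (\<lambda>z. [(from_base (to_base z), True)]) (core_rel D' c)"
    by (simp add: word_subst_letters comp_def apfst_compose)
  also have "pres_eq (core_rels D') \<dots> (core_rel D' c)"
    using core_rel_letters_outer [OF c'] odd_block_arcs_inner
    by (intro pres_eq_word_subst_self pres_eq_from_base_to_base) auto
  also have "pres_eq (core_rels D') \<dots> []"
    using c'(1) by (intro pres_eq_relator_Nil) (simp add: core_rels_def)
  finally show ?thesis .
qed

lemma base_respects_rels:
  assumes "r \<in> core_rels D'"
  shows "pres_eq (core_rels D) (word_subst base_image r) []"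
proof -
  obtain c where c: "c \<in> crossings D'" "r = core_rel D' c"
    using assms by (auto simp: core_rels_def)
  show ?thesis
  proof (cases "c \<in> set cs")
    case False
    then have "c \<in> crossings D"
      using c crossings_D by auto
    moreover have "x \<notin> odd_block_arcs" if "x \<in> fst ` set r" for x
      using that core_rel_letters_outer [OF c(1) False] odd_block_arcs_inner c(2) by blast
    then have "word_subst base_image r = word_subst (\<lambda>z. [(to_base z, True)]) r"
      by (intro word_subst_cong) (simp add: base_image_outer)
    ultimately show ?thesis
      using c core_rel_D by (simp add: word_subst_letters pres_eq_relator_Nil core_rels_def)
  next
    case True
    then obtain k where k: "k < length cs" "c = cs ! k"
      by (auto simp: in_set_conv_nth)
    let ?y = "[(to_base over_arc, True)]" and ?w = "core_iter (to_base over_arc) merged_arc"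
    have "over_arc \<notin> odd_block_arcs"
      using over_arc_outer odd_block_arcs_inner by blast
    then have "base_image over_arc = ?y"
      by (rule base_image_outer)
    then have "word_subst base_image r = (?y @ inv_word (?w k) @ ?y) @ inv_word (?w (Suc k))"
      using c k by (simp add: core_rel_block base_image_block_arc)
    also have "pres_eq (core_rels D) \<dots> (?w (Suc k) @ inv_word (?w (Suc k)))"
      using pres_eq.sym [OF core_iter_Suc] by (rule pres_eq_append) simp
    also have "pres_eq (core_rels D) \<dots> []"
      using pres_eq_cancel_word [of _ "[]" _ "[]"] by simp
    finally show ?thesis .
  qed
qed

lemma lift_image_in_words: "z \<in> core_gens D \<Longrightarrow> lift_image z \<in> words (core_gens D')"
  using from_base_in_core_gens by (simp add: lift_image_def words_def)

lemma base_image_in_words: "z \<in> core_gens D' \<Longrightarrow> base_image z \<in> words (core_gens D)"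
  using to_base_in_core_gens merged_arc_in_core_gens over_arc_outer
  by (auto simp: base_image_def core_iter_def words_def)

lemma base_image_lift_image:
  assumes "z \<in> core_gens D"
  shows "pres_eq (core_rels D) (word_subst base_image (lift_image z)) [(z, True)]"
proof -
  have "from_base z \<notin> odd_block_arcs"
    using from_base_outer [OF assms] odd_block_arcs_inner by blast
  then show ?thesis
    using to_base_from_base [OF assms] by (simp add: lift_image_def base_image_outer)
qed

lemma lift_image_base_image:
  assumes "z \<in> core_gens D'"
  shows "pres_eq (core_rels D') (word_subst lift_image (base_image z)) [(z, True)]"
proof (cases "z \<in> odd_block_arcs")
  case True
  then obtain k where k: "k < length cs" "odd k" "z = block_arc k"
    by (auto simp: odd_block_arcs_def)
  have "word_subst lift_image (base_image z) =
      core_iter (from_base (to_base over_arc)) (from_base (to_base arc_in)) k"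
    using k by (simp add: base_image_block_arc word_subst_lift_image map_apfst_core_iter
        to_base_arc_in from_base_merged_arc)
  also have "\<dots> = word_subst (\<lambda>x. [(from_base (to_base x), True)]) (core_iter over_arc arc_in k)"
    by (simp add: word_subst_letters map_apfst_core_iter)
  also have "pres_eq (core_rels D') \<dots> (core_iter over_arc arc_in k)"
    using over_arc_outer arc_in_outer odd_block_arcs_inner
    by (intro pres_eq_word_subst_self pres_eq_from_base_to_base) (auto simp: core_iter_def split: if_splits)
  also have "pres_eq (core_rels D') \<dots> [(z, True)]"
    using block_arc_core_iter [of k] k by (simp add: pres_eq.sym)
  finally show ?thesis .
next
  case False
  then show ?thesis
    using pres_eq_from_base_to_base [OF assms] by (simp add: base_image_outer lift_image_def)
qed

theorem core_group_iso: "core_group D \<cong> core_group D'"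
  unfolding core_group_def
  by (rule presented_group_iso [where f = lift_image and g = base_image])
    (auto intro: lift_respects_rels base_respects_rels lift_image_in_words base_image_in_words
      base_image_lift_image lift_image_base_image)

end

lemma cyc_block_rotate:
  assumes "cyc_block w xs"
  obtains k where "rotate k w = xs @ drop (length xs) (rotate k w)"
  using assms unfolding cyc_block_def by (metis append_take_drop_id)

theorem proposition6p2:
  fixes n :: nat and D D' :: "'c gauss"
  assumes "even n" and "n > 0"
    and "wf_gauss D" and "wf_gauss D'"
    and "vmove n D D'"
  shows "core_group D \<cong> core_group D'"
proof -
  obtain cs where cs: "length cs = n" "distinct cs"
    and D: "D = map (filter (\<lambda>p. fst p \<notin> set cs)) D'"
    and a: "\<exists>i<length D'. cyc_block (D' ! i) (map (\<lambda>c. (c, False)) cs)"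
    and b: "\<exists>i<length D'. cyc_block (D' ! i) (map (\<lambda>c. (c, True)) cs) \<or>
                          cyc_block (D' ! i) (map (\<lambda>c. (c, True)) (rev cs))"
    using assms(5) unfolding vmove_def by metis
  obtain ia ka where "ia < length D'"
    and "rotate ka (D' ! ia) = map (\<lambda>c. (c, False)) cs @ drop n (rotate ka (D' ! ia))"
    using a cyc_block_rotate cs(1) by (metis length_map)
  moreover obtain ib kb over_block where "ib < length D'"
    and "set over_block = (\<lambda>c. (c, True)) ` set cs"
    and "rotate kb (D' ! ib) = over_block @ drop (length over_block) (rotate kb (D' ! ib))"
    using b cyc_block_rotate by (metis list.set_map set_rev)
  moreover have "cs \<noteq> []"
    using assms(2) cs(1) by auto
  ultimately interpret vn_move D D' cs ia ka ib kb "drop n (rotate ka (D' ! ia))" over_block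
      "drop (length over_block) (rotate kb (D' ! ib))"
    using assms(1,4) cs D by unfold_locales auto
  show ?thesis
    by (rule core_group_iso)
qed

end
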